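(* Let $H$ be a hero and let $c$ be the maximum dichromatic number of a tournament containing no induced subdigraph isomorphic to $H$. Then every oriented graph $D$ in which both $x^+$ and $x^-$ induce tournaments for every vertex $x$, and which contains no induced subdigraph isomorphic to $H$, has dichromatic number at most $2c$.
   Context: Digraphs are finite, no loops, no parallel arcs; an oriented graph has no digon. $x^+$, $x^-$ are out- and in-neighbourhoods. The dichromatic number of a digraph is the least number of colours in a vertex colouring in which every colour class induces a subdigraph with no directed cycle. A hero is a tournament $H$ such that the tournaments containing no induced copy of $H$ have bounded dichromatic number (so $c$ is finite). *)

theory Defs
  imports Main
begin

definition digraph :: "'a set \<Rightarrow> ('a \<times> 'a) set \<Rightarrow> bool" where
  "digraph V A \<longleftrightarrow> finite V \<and> A \<subseteq> V \<times> V \<and> (\<forall>x. (x, x) \<notin> A)"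

definition oriented :: "'a set \<Rightarrow> ('a \<times> 'a) set \<Rightarrow> bool" where
  "oriented V A \<longleftrightarrow> digraph V A \<and> (\<forall>x y. (x, y) \<in> A \<longrightarrow> (y, x) \<notin> A)"

definition tournament :: "'a set \<Rightarrow> ('a \<times> 'a) set \<Rightarrow> bool" where
  "tournament V A \<longleftrightarrow> oriented V A \<and>
     (\<forall>x\<in>V. \<forall>y\<in>V. x \<noteq> y \<longrightarrow> (x, y) \<in> A \<or> (y, x) \<in> A)"

definition induced_arcs :: "('a \<times> 'a) set \<Rightarrow> 'a set \<Rightarrow> ('a \<times> 'a) set" where
  "induced_arcs A S = A \<inter> (S \<times> S)"

definition out_nbhd :: "('a \<times> 'a) set \<Rightarrow> 'a \<Rightarrow> 'a set" where
  "out_nbhd A x = {y. (x, y) \<in> A}"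

definition in_nbhd :: "('a \<times> 'a) set \<Rightarrow> 'a \<Rightarrow> 'a set" where
  "in_nbhd A x = {y. (y, x) \<in> A}"

definition contains_induced :: "'a set \<Rightarrow> ('a \<times> 'a) set \<Rightarrow> 'b set \<Rightarrow> ('b \<times> 'b) set \<Rightarrow> bool" where
  "contains_induced V A VH AH \<longleftrightarrow>
     (\<exists>f. inj_on f VH \<and> f ` VH \<subseteq> V \<and>
          (\<forall>x\<in>VH. \<forall>y\<in>VH. (x, y) \<in> AH \<longleftrightarrow> (f x, f y) \<in> A))"

definition dicolouring :: "'a set \<Rightarrow> ('a \<times> 'a) set \<Rightarrow> nat \<Rightarrow> ('a \<Rightarrow> nat) \<Rightarrow> bool" where
  "dicolouring V A k col \<longleftrightarrow> col ` V \<subseteq> {..<k} \<and>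
     (\<forall>i<k. acyclic (induced_arcs A {v\<in>V. col v = i}))"

definition dichromatic_number :: "'a set \<Rightarrow> ('a \<times> 'a) set \<Rightarrow> nat" where
  "dichromatic_number V A = (LEAST k. \<exists>col. dicolouring V A k col)"

text \<open>Every finite
  tournament is isomorphic to one on a finite set of naturals, so it suffices to
  quantify over tournaments with vertices in nat.\<close>
definition hero :: "'b set \<Rightarrow> ('b \<times> 'b) set \<Rightarrow> bool" where
  "hero VH AH \<longleftrightarrow> tournament VH AH \<and>
     (\<exists>c. \<forall>(V::nat set) A. tournament V A \<and> \<not> contains_induced V A VH AH
            \<longrightarrow> dichromatic_number V A \<le> c)"

text \<open>The maximum dichromatic number of an H-free tournament (finite set when H is a hero).\<close>
definition hero_c :: "'b set \<Rightarrow> ('b \<times> 'b) set \<Rightarrow> nat" where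
  "hero_c VH AH = Max {dichromatic_number V A | (V::nat set) A.
                        tournament V A \<and> \<not> contains_induced V A VH AH}"

end

theory Submission
  imports Defs
begin

text \<open>Pick a vertex v and let R be the set of vertices reachable from v. Since all out- and
  in-neighbourhoods are tournaments, the in-neighbours of v in R form a tournament, and so
  does every distance layer of the other vertices of R. These tournaments are H-free, hence
  c-dicolourable: one palette of c colours serves the in-neighbours of v, a second palette
  all layers simultaneously, and the remaining vertices are coloured by induction, since no
  arc leaves R.\<close>

lemma trancl_map_prod_image:
  assumes "(x, y) \<in> r\<^sup>+"
  shows "(g x, g y) \<in> (map_prod g g ` r)\<^sup>+"
  using assms
proof (induction rule: trancl_induct)
  case (base y)
  then show ?case by (intro r_into_trancl) force
next
  case (step y z)
  then have "(g y, g z) \<in> map_prod g g ` r" by force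
  with step.IH show ?case by (rule trancl_into_trancl)
qed

lemma acyclic_map_prod_imageD: "acyclic (map_prod g g ` r) \<Longrightarrow> acyclic r"
  unfolding acyclic_def by (metis trancl_map_prod_image)

lemma acyclic_levels:
  fixes h :: "'a \<Rightarrow> nat"
  assumes mono: "\<And>x y. (x, y) \<in> r \<Longrightarrow> h x \<le> h y"
    and level: "\<And>n. acyclic (r \<inter> {x. h x = n} \<times> {x. h x = n})"
  shows "acyclic r"
proof (rule acyclicI, intro allI notI)
  have in_level: "h x \<le> h y \<and> (h y \<le> h x \<longrightarrow> (x, y) \<in> (r \<inter> {z. h z = h x} \<times> {z. h z = h x})\<^sup>+)"
    if "(x, y) \<in> r\<^sup>+" for x y
    using that
  proof (induction rule: trancl_induct)
    case (base y)
    then show ?case using mono[of x y] by auto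
  next
    case (step y z)
    then show ?case using mono[of y z] by (auto intro: trancl_into_trancl)
  qed
  fix x assume "(x, x) \<in> r\<^sup>+"
  then have "(x, x) \<in> (r \<inter> {z. h z = h x} \<times> {z. h z = h x})\<^sup>+" using in_level by blast
  then show False using level[of "h x"] unfolding acyclic_def by blast
qed

lemma dicolouring_iff:
  "dicolouring V A k col \<longleftrightarrow> col ` V \<subseteq> {..<k} \<and>
     (\<forall>i<k. acyclic (A \<inter> {v\<in>V. col v = i} \<times> {v\<in>V. col v = i}))"
  unfolding dicolouring_def induced_arcs_def ..

lemma dicolouring_less: "dicolouring V A k col \<Longrightarrow> x \<in> V \<Longrightarrow> col x < k"
  unfolding dicolouring_def by blast

lemma dicolouring_empty [simp]: "dicolouring {} A k col"
  unfolding dicolouring_def induced_arcs_def by (simp add: acyclic_def)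

lemma dicolouring_cong:
  assumes "dicolouring V A k col" and "V = V'" and "\<And>x. x \<in> V \<Longrightarrow> col x = col' x"
  shows "dicolouring V' A k col'"
proof -
  have "{v\<in>V. col v = i} = {v\<in>V'. col' v = i}" for i using assms(2,3) by auto
  moreover have "col ` V = col' ` V'" using assms(2,3) by auto
  ultimately show ?thesis using assms(1) unfolding dicolouring_def by simp
qed

lemma dicolouring_mono:
  assumes "dicolouring V A k col" and "k \<le> k'"
  shows "dicolouring V A k' col"
  unfolding dicolouring_iff
proof (intro conjI allI impI)
  show "col ` V \<subseteq> {..<k'}" using assms unfolding dicolouring_def by auto
  fix i assume "i < k'"
  show "acyclic (A \<inter> {v\<in>V. col v = i} \<times> {v\<in>V. col v = i})"
  proof (cases "i < k")
    case True
    then show ?thesis using assms(1) unfolding dicolouring_iff by blast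
  next
    case False
    then have "{v\<in>V. col v = i} = {}" using assms(1) dicolouring_less by fastforce
    then show ?thesis by (simp only:) (simp add: acyclic_def)
  qed
qed

lemma dicolouring_shift:
  assumes "dicolouring V A k col"
  shows "dicolouring V A (m + k) (\<lambda>x. m + col x)"
  unfolding dicolouring_iff
proof (intro conjI allI impI)
  show "(\<lambda>x. m + col x) ` V \<subseteq> {..<m + k}" using assms unfolding dicolouring_def by auto
  fix i assume "i < m + k"
  show "acyclic (A \<inter> {v\<in>V. m + col v = i} \<times> {v\<in>V. m + col v = i})"
  proof (cases "m \<le> i")
    case True
    then have "{v\<in>V. m + col v = i} = {v\<in>V. col v = i - m}" by auto
    moreover have "i - m < k" using True \<open>i < m + k\<close> by simp
    ultimately show ?thesis using assms unfolding dicolouring_iff by simp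
  next
    case False
    then have "{v\<in>V. m + col v = i} = {}" by auto
    then show ?thesis by (simp only:) (simp add: acyclic_def)
  qed
qed

lemma dicolouring_by_levels:
  fixes level :: "'a \<Rightarrow> nat"
  assumes levels: "\<And>n. dicolouring {x\<in>V. level x = n} A k col"
    and mono: "\<And>x y. x \<in> V \<Longrightarrow> y \<in> V \<Longrightarrow> (x, y) \<in> A \<Longrightarrow> col x = col y \<Longrightarrow> level x \<le> level y"
  shows "dicolouring V A k col"
  unfolding dicolouring_iff
proof (intro conjI allI impI)
  show "col ` V \<subseteq> {..<k}"
  proof (rule image_subsetI)
    fix x assume "x \<in> V"
    then have "x \<in> {y\<in>V. level y = level x}" by simp
    then show "col x \<in> {..<k}" using dicolouring_less[OF levels] by blast
  qed
  fix i assume "i < k"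
  let ?r = "A \<inter> {v\<in>V. col v = i} \<times> {v\<in>V. col v = i}"
  show "acyclic ?r"
  proof (rule acyclic_levels[where h = level])
    show "level x \<le> level y" if "(x, y) \<in> ?r" for x y
      using that mono by auto
    fix n
    have "?r \<inter> {x. level x = n} \<times> {x. level x = n} =
        A \<inter> {v\<in>{x\<in>V. level x = n}. col v = i} \<times> {v\<in>{x\<in>V. level x = n}. col v = i}"
      by blast
    then show "acyclic (?r \<inter> {x. level x = n} \<times> {x. level x = n})"
      using levels[of n] \<open>i < k\<close> unfolding dicolouring_iff by simp
  qed
qed

lemma dichromatic_number_le: "dicolouring V A k col \<Longrightarrow> dichromatic_number V A \<le> k"
  unfolding dichromatic_number_def by (blast intro: Least_le)

lemma dicolouring_dichromatic_number:
  assumes "digraph V A"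
  obtains col where "dicolouring V A (dichromatic_number V A) col"
proof -
  have "finite V" and no_loop: "\<And>x. (x, x) \<notin> A" using assms unfolding digraph_def by auto
  obtain col :: "'a \<Rightarrow> nat" and n where col: "col ` V = {i. i < n}" "inj_on col V"
    using finite_imp_inj_to_nat_seg[OF \<open>finite V\<close>] by blast
  have "dicolouring V A n col"
    unfolding dicolouring_iff
  proof (intro conjI allI impI)
    show "col ` V \<subseteq> {..<n}" using col(1) by auto
    fix i
    have "A \<inter> {v\<in>V. col v = i} \<times> {v\<in>V. col v = i} = {}"
    proof (intro equals0I)
      fix e assume "e \<in> A \<inter> {v\<in>V. col v = i} \<times> {v\<in>V. col v = i}"
      then obtain x y where "(x, y) \<in> A" "x \<in> V" "y \<in> V" "col x = col y" by auto
      moreover from this have "x = y" using inj_onD[OF col(2)] by blast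
      ultimately show False using no_loop by simp
    qed
    then show "acyclic (A \<inter> {v\<in>V. col v = i} \<times> {v\<in>V. col v = i})" by (simp add: acyclic_def)
  qed
  then have "\<exists>k col. dicolouring V A k col" by blast
  then have "\<exists>col. dicolouring V A (dichromatic_number V A) col"
    unfolding dichromatic_number_def by (rule LeastI_ex)
  with that show ?thesis by blast
qed

lemma map_prod_image_mem_iff:
  assumes "inj_on \<phi> S" and "B \<subseteq> S \<times> S" and "x \<in> S" and "y \<in> S"
  shows "(\<phi> x, \<phi> y) \<in> map_prod \<phi> \<phi> ` B \<longleftrightarrow> (x, y) \<in> B"
proof
  assume "(\<phi> x, \<phi> y) \<in> map_prod \<phi> \<phi> ` B"
  then obtain a b where ab: "(a, b) \<in> B" "\<phi> a = \<phi> x" "\<phi> b = \<phi> y" by auto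
  then have "a \<in> S" "b \<in> S" using assms(2) by auto
  then have "a = x" and "b = y" using ab assms(3,4) inj_onD[OF assms(1)] by auto
  with ab show "(x, y) \<in> B" by simp
qed force

lemma tournament_inj_image:
  assumes tour: "tournament S B" and inj: "inj_on \<phi> S"
  shows "tournament (\<phi> ` S) (map_prod \<phi> \<phi> ` B)"
  unfolding tournament_def oriented_def digraph_def
proof (intro conjI allI impI ballI)
  have "finite S" and B_sub: "B \<subseteq> S \<times> S" and no_loop: "\<And>x. (x, x) \<notin> B"
    and asym: "\<And>x y. (x, y) \<in> B \<Longrightarrow> (y, x) \<notin> B"
    and total: "\<And>x y. x \<in> S \<Longrightarrow> y \<in> S \<Longrightarrow> x \<noteq> y \<Longrightarrow> (x, y) \<in> B \<or> (y, x) \<in> B"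
    using tour unfolding tournament_def oriented_def digraph_def by auto
  note mem = map_prod_image_mem_iff[OF inj B_sub]
  show "finite (\<phi> ` S)" using \<open>finite S\<close> by simp
  show "map_prod \<phi> \<phi> ` B \<subseteq> \<phi> ` S \<times> \<phi> ` S" using B_sub by auto
  show "(x, x) \<notin> map_prod \<phi> \<phi> ` B" for x
  proof
    assume "(x, x) \<in> map_prod \<phi> \<phi> ` B"
    then obtain a b where "(a, b) \<in> B" "\<phi> a = \<phi> b" by auto
    moreover from this have "a = b" using B_sub inj_onD[OF inj] by blast
    ultimately show False using no_loop by simp
  qed
  show "(y, x) \<notin> map_prod \<phi> \<phi> ` B" if xy: "(x, y) \<in> map_prod \<phi> \<phi> ` B" for x y
  proof -
    obtain a b where "(a, b) \<in> B" "x = \<phi> a" "y = \<phi> b" using xy by auto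
    moreover from this have "a \<in> S" "b \<in> S" using B_sub by auto
    ultimately show ?thesis using asym mem by simp
  qed
  show "(x, y) \<in> map_prod \<phi> \<phi> ` B \<or> (y, x) \<in> map_prod \<phi> \<phi> ` B"
    if xy: "x \<in> \<phi> ` S" "y \<in> \<phi> ` S" "x \<noteq> y" for x y
  proof -
    obtain a b where "a \<in> S" "b \<in> S" "x = \<phi> a" "y = \<phi> b" using xy(1,2) by auto
    then show ?thesis using total mem xy(3) by auto
  qed
qed

lemma contains_induced_inj_image:
  assumes "contains_induced (\<phi> ` S) (map_prod \<phi> \<phi> ` B) VH AH"
    and "inj_on \<phi> S" and "B \<subseteq> S \<times> S"
  shows "contains_induced S B VH AH"
proof -
  obtain f where f: "inj_on f VH" "f ` VH \<subseteq> \<phi> ` S"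
    "\<forall>x\<in>VH. \<forall>y\<in>VH. (x, y) \<in> AH \<longleftrightarrow> (f x, f y) \<in> map_prod \<phi> \<phi> ` B"
    using assms(1) unfolding contains_induced_def by blast
  let ?f = "inv_into S \<phi> \<circ> f"
  have f_eq: "\<phi> (?f x) = f x" and f_in: "?f x \<in> S" if "x \<in> VH" for x
    using f(2) that by (auto intro!: f_inv_into_f inv_into_into)
  have "inj_on ?f VH"
    using comp_inj_on[OF f(1) inj_on_inv_into[OF f(2)]] .
  moreover have "\<forall>x\<in>VH. \<forall>y\<in>VH. (x, y) \<in> AH \<longleftrightarrow> (?f x, ?f y) \<in> B"
    using f(3) f_eq f_in map_prod_image_mem_iff[OF assms(2,3)] by metis
  ultimately show ?thesis
    unfolding contains_induced_def using f_in by blast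
qed

lemma dicolouring_inj_image:
  assumes "dicolouring (\<phi> ` S) (map_prod \<phi> \<phi> ` B) k col"
  shows "dicolouring S B k (col \<circ> \<phi>)"
  unfolding dicolouring_iff
proof (intro conjI allI impI)
  show "(col \<circ> \<phi>) ` S \<subseteq> {..<k}" using assms unfolding dicolouring_def by auto
  fix i assume "i < k"
  let ?K = "{v\<in>S. (col \<circ> \<phi>) v = i}"
  have "acyclic (map_prod \<phi> \<phi> ` B \<inter> {v\<in>\<phi> ` S. col v = i} \<times> {v\<in>\<phi> ` S. col v = i})"
    using assms \<open>i < k\<close> unfolding dicolouring_iff by blast
  moreover have "map_prod \<phi> \<phi> ` (B \<inter> ?K \<times> ?K)
      \<subseteq> map_prod \<phi> \<phi> ` B \<inter> {v\<in>\<phi> ` S. col v = i} \<times> {v\<in>\<phi> ` S. col v = i}"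
    by (rule image_subsetI) auto
  ultimately show "acyclic (B \<inter> ?K \<times> ?K)"
    by (rule acyclic_map_prod_imageD[OF acyclic_subset])
qed

lemma dichromatic_number_le_hero_c:
  fixes V :: "nat set"
  assumes "hero VH AH" and "tournament V A" and "\<not> contains_induced V A VH AH"
  shows "dichromatic_number V A \<le> hero_c VH AH"
proof -
  let ?numbers = "{dichromatic_number V A | (V::nat set) A.
      tournament V A \<and> \<not> contains_induced V A VH AH}"
  obtain bound where "\<forall>(V::nat set) A. tournament V A \<and> \<not> contains_induced V A VH AH
      \<longrightarrow> dichromatic_number V A \<le> bound"
    using assms(1) unfolding hero_def by blast
  then have "finite ?numbers" by (auto intro: finite_subset[of _ "{..bound}"])
  moreover have "dichromatic_number V A \<in> ?numbers" using assms(2,3) by blast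
  ultimately show ?thesis unfolding hero_c_def by (rule Max_ge)
qed

text \<open>The definition of a hero only constrains tournaments on naturals, hence the relabelling.\<close>

lemma hero_dicolouring:
  fixes S :: "'a set"
  assumes "hero VH AH" and "tournament S B" and "\<not> contains_induced S B VH AH"
  obtains col where "dicolouring S B (hero_c VH AH) col"
proof -
  have "finite S" and B_sub: "B \<subseteq> S \<times> S"
    using assms(2) unfolding tournament_def oriented_def digraph_def by auto
  then obtain \<phi> :: "'a \<Rightarrow> nat" where \<phi>: "inj_on \<phi> S"
    using finite_imp_inj_to_nat_seg by blast
  let ?V = "\<phi> ` S" and ?A = "map_prod \<phi> \<phi> ` B"
  have tour: "tournament ?V ?A" using tournament_inj_image[OF assms(2) \<phi>] .
  have free: "\<not> contains_induced ?V ?A VH AH"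
    using contains_induced_inj_image \<phi> B_sub assms(3) by blast
  obtain col where "dicolouring ?V ?A (dichromatic_number ?V ?A) col"
    using dicolouring_dichromatic_number tour unfolding tournament_def oriented_def by blast
  then have "dicolouring ?V ?A (hero_c VH AH) col"
    using dicolouring_mono dichromatic_number_le_hero_c[OF assms(1) tour free] by blast
  then show ?thesis using dicolouring_inj_image that by blast
qed

lemma contains_induced_induced_arcs:
  assumes "contains_induced S (induced_arcs A S) VH AH" and "S \<subseteq> V"
  shows "contains_induced V A VH AH"
proof -
  obtain f where "inj_on f VH" "f ` VH \<subseteq> S"
      "\<forall>x\<in>VH. \<forall>y\<in>VH. (x, y) \<in> AH \<longleftrightarrow> (f x, f y) \<in> induced_arcs A S"
    using assms(1) unfolding contains_induced_def by blast
  moreover from this have "\<forall>x\<in>VH. \<forall>y\<in>VH. (f x, f y) \<in> induced_arcs A S \<longleftrightarrow> (f x, f y) \<in> A"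
    unfolding induced_arcs_def by blast
  ultimately show ?thesis
    unfolding contains_induced_def using assms(2) by (intro exI[of _ f]) auto
qed

lemma tournament_induced_arcs:
  assumes "oriented V A" and "S \<subseteq> V"
    and "\<And>x y. x \<in> S \<Longrightarrow> y \<in> S \<Longrightarrow> x \<noteq> y \<Longrightarrow> (x, y) \<in> A \<or> (y, x) \<in> A"
  shows "tournament S (induced_arcs A S)"
proof -
  have "finite S" using assms(1,2) finite_subset unfolding oriented_def digraph_def by blast
  with assms show ?thesis
    unfolding tournament_def oriented_def digraph_def induced_arcs_def by auto
qed

lemma hero_dicolouring_induced:
  assumes "hero VH AH" and "\<not> contains_induced V A VH AH" and "S \<subseteq> V"
    and "tournament S (induced_arcs A S)"
  obtains col where "dicolouring S A (hero_c VH AH) col"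
proof -
  have "\<not> contains_induced S (induced_arcs A S) VH AH"
    using assms(2,3) contains_induced_induced_arcs by blast
  then obtain col where "dicolouring S (induced_arcs A S) (hero_c VH AH) col"
    using hero_dicolouring[OF assms(1,4)] by blast
  moreover have "induced_arcs A S \<inter> {v\<in>S. col v = i} \<times> {v\<in>S. col v = i}
      = A \<inter> {v\<in>S. col v = i} \<times> {v\<in>S. col v = i}" for i
    unfolding induced_arcs_def by auto
  ultimately have "dicolouring S A (hero_c VH AH) col"
    unfolding dicolouring_iff by simp
  then show ?thesis using that by blast
qed

locale local_tournament =
  fixes V :: "'a set" and A :: "('a \<times> 'a) set"
  assumes oriented: "oriented V A"
    and out_nbhd_tournament: "\<forall>x\<in>V. tournament (out_nbhd A x) (induced_arcs A (out_nbhd A x))"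
    and in_nbhd_tournament: "\<forall>x\<in>V. tournament (in_nbhd A x) (induced_arcs A (in_nbhd A x))"
begin

lemma out_nbrs_adjacent:
  "x \<in> V \<Longrightarrow> (x, u) \<in> A \<Longrightarrow> (x, w) \<in> A \<Longrightarrow> u \<noteq> w \<Longrightarrow> (u, w) \<in> A \<or> (w, u) \<in> A"
  using out_nbhd_tournament unfolding tournament_def induced_arcs_def out_nbhd_def by blast

lemma in_nbrs_adjacent:
  "x \<in> V \<Longrightarrow> (u, x) \<in> A \<Longrightarrow> (w, x) \<in> A \<Longrightarrow> u \<noteq> w \<Longrightarrow> (u, w) \<in> A \<or> (w, u) \<in> A"
  using in_nbhd_tournament unfolding tournament_def induced_arcs_def in_nbhd_def by blast

end

locale local_tournament_root = local_tournament +
  fixes W and v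
  assumes W_subset: "W \<subseteq> V" and root_in_W: "v \<in> W"
begin

definition reach :: "'a set" where
  "reach = {x. (v, x) \<in> (induced_arcs A W)\<^sup>*}"

definition dist :: "'a \<Rightarrow> nat" where
  "dist x = (LEAST n. (v, x) \<in> induced_arcs A W ^^ n)"

lemma reach_subset: "reach \<subseteq> W"
proof
  fix x assume "x \<in> reach"
  then have "(v, x) \<in> (induced_arcs A W)\<^sup>*" unfolding reach_def by simp
  then show "x \<in> W" by (induction rule: rtrancl_induct) (auto simp: root_in_W induced_arcs_def)
qed

lemma reach_subset_V: "x \<in> reach \<Longrightarrow> x \<in> V"
  using reach_subset W_subset by blast

lemma root_in_reach: "v \<in> reach"
  unfolding reach_def by simp

lemma relpow_dist: "x \<in> reach \<Longrightarrow> (v, x) \<in> induced_arcs A W ^^ dist x"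
  unfolding reach_def dist_def by (metis mem_Collect_eq rtrancl_power LeastI_ex)

lemma dist_le: "(v, x) \<in> induced_arcs A W ^^ n \<Longrightarrow> dist x \<le> n"
  unfolding dist_def by (rule Least_le)

lemma dist_eq_0_iff: "x \<in> reach \<Longrightarrow> dist x = 0 \<longleftrightarrow> x = v"
  using relpow_dist dist_le[of v 0] by fastforce

lemma reach_arc:
  assumes "x \<in> reach" and "(x, y) \<in> A" and "y \<in> W"
  shows "y \<in> reach" and "dist y \<le> Suc (dist x)"
proof -
  have "(x, y) \<in> induced_arcs A W" using assms reach_subset unfolding induced_arcs_def by auto
  then have "(v, y) \<in> induced_arcs A W ^^ Suc (dist x)"
    using relpow_dist[OF assms(1)] by (rule relpow_Suc_I[rotated])
  then show "y \<in> reach" and "dist y \<le> Suc (dist x)"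
    using dist_le rtrancl_power unfolding reach_def by blast+
qed

lemma reach_pred:
  assumes "x \<in> reach" and "x \<noteq> v"
  obtains q where "q \<in> reach" and "(q, x) \<in> A" and "dist x = Suc (dist q)"
proof -
  obtain k where k: "dist x = Suc k" using dist_eq_0_iff assms not0_implies_Suc by blast
  then have "(v, x) \<in> induced_arcs A W ^^ Suc k" using relpow_dist[OF assms(1)] by simp
  then obtain q where q: "(v, q) \<in> induced_arcs A W ^^ k" "(q, x) \<in> induced_arcs A W"
    by (rule relpow_Suc_E)
  have "q \<in> reach" using q(1) rtrancl_power unfolding reach_def by blast
  moreover have "(q, x) \<in> A" and "x \<in> W" using q(2) unfolding induced_arcs_def by auto
  moreover have "dist x = Suc (dist q)"
    using dist_le[OF q(1)] reach_arc(2)[OF \<open>q \<in> reach\<close> \<open>(q, x) \<in> A\<close> \<open>x \<in> W\<close>] k by simp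
  ultimately show ?thesis using that by blast
qed

text \<open>u and the predecessor q of w on a shortest path are in-neighbours of w; an arc from q
  to u would give dist u \<le> dist w, so u dominates q, and so on down to v.\<close>

lemma arc_against_dist_to_root:
  assumes "u \<in> reach" and "w \<in> reach" and "(u, w) \<in> A" and "dist w < dist u"
  shows "(u, v) \<in> A"
  using assms
proof (induction "dist w" arbitrary: w)
  case 0
  then show ?case using dist_eq_0_iff by auto
next
  case (Suc k)
  then have "w \<noteq> v" using dist_eq_0_iff[OF root_in_reach] by auto
  then obtain q where q: "q \<in> reach" "(q, w) \<in> A" "dist w = Suc (dist q)"
    using reach_pred Suc.prems(2) by blast
  have "(q, u) \<notin> A"
    using reach_arc(2)[OF q(1) _ reach_subset[THEN subsetD, OF Suc.prems(1)]] q(3) Suc.prems(4) by fastforce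
  moreover have "u \<noteq> q" using q Suc.prems by auto
  ultimately have "(u, q) \<in> A"
    using in_nbrs_adjacent[OF reach_subset_V[OF Suc.prems(2)] Suc.prems(3) q(2)] by blast
  then show ?case using Suc.hyps(1)[of q] Suc.hyps(2) q Suc.prems by simp
qed

lemma dist_mono_arc:
  assumes "x \<in> reach" and "(x, y) \<in> A" and "y \<in> W" and "(x, v) \<notin> A"
  shows "dist x \<le> dist y"
  using arc_against_dist_to_root[OF assms(1) reach_arc(1)[OF assms(1-3)] assms(2)] assms(4)
  by fastforce

lemma pred_not_to_root:
  assumes "a \<in> reach" and "(a, v) \<notin> A" and "q \<in> reach" and "(q, a) \<in> A"
    and "dist a = Suc (dist q)" and "dist q \<noteq> 0"
  shows "(q, v) \<notin> A"
proof
  assume "(q, v) \<in> A"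
  have "a \<noteq> v" using assms(5) dist_eq_0_iff[OF root_in_reach] by auto
  then have "(a, v) \<in> A \<or> (v, a) \<in> A"
    using out_nbrs_adjacent[OF reach_subset_V[OF assms(3)] assms(4) \<open>(q, v) \<in> A\<close>] by blast
  moreover have "(v, a) \<notin> A"
  proof
    assume "(v, a) \<in> A"
    then have "dist a \<le> Suc (dist v)"
      using reach_arc(2)[OF root_in_reach] reach_subset assms(1) by blast
    then show False using assms(5,6) dist_eq_0_iff[OF root_in_reach] by simp
  qed
  ultimately show False using assms(2) by blast
qed

lemma adjacent_via_preds:
  assumes "a \<in> reach" and "(a, v) \<notin> A" and "b' \<in> reach" and "dist a = Suc (dist b')"
    and "a' \<in> reach" and "(a', a) \<in> A" and "(a', b') \<in> A"
    and "(b', b) \<in> A" and "a \<noteq> b"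
  shows "(a, b) \<in> A \<or> (b, a) \<in> A"
proof -
  have "a \<noteq> b'" using assms(4) by auto
  then have "(a, b') \<in> A \<or> (b', a) \<in> A"
    using out_nbrs_adjacent[OF reach_subset_V[OF assms(5)] assms(6,7)] by blast
  moreover have "(a, b') \<notin> A"
    using arc_against_dist_to_root[OF assms(1,3)] assms(2,4) by auto
  ultimately have "(b', a) \<in> A" by blast
  then show ?thesis
    using out_nbrs_adjacent[OF reach_subset_V[OF assms(3)] _ assms(8,9)] by blast
qed

lemma same_dist_adjacent:
  assumes "u \<in> reach" and "w \<in> reach" and "dist u = dist w"
    and "(u, v) \<notin> A" and "(w, v) \<notin> A" and "u \<noteq> w"
  shows "(u, w) \<in> A \<or> (w, u) \<in> A"
  using assms
proof (induction "dist u" arbitrary: u w)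
  case 0
  then have "u = v" and "w = v" using dist_eq_0_iff by metis+
  with \<open>u \<noteq> w\<close> show ?case by simp
next
  case (Suc k)
  then have "u \<noteq> v" and "w \<noteq> v" using dist_eq_0_iff[OF root_in_reach] by auto
  then obtain u' w' where u': "u' \<in> reach" "(u', u) \<in> A" "dist u = Suc (dist u')"
    and w': "w' \<in> reach" "(w', w) \<in> A" "dist w = Suc (dist w')"
    using reach_pred Suc.prems(1,2) by metis
  show ?case
  proof (cases "u' = w'")
    case True
    then show ?thesis using out_nbrs_adjacent[OF reach_subset_V[OF u'(1)] u'(2)] w'(2) Suc.prems(6)
      by blast
  next
    case False
    have "dist u' \<noteq> 0"
    proof
      assume "dist u' = 0"
      moreover from this have "dist w' = 0" using u'(3) w'(3) Suc.prems(3) by simp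
      ultimately show False using dist_eq_0_iff u'(1) w'(1) False by metis
    qed
    then have "(u', v) \<notin> A" and "(w', v) \<notin> A"
      using pred_not_to_root u' w' Suc.prems by (metis Suc_inject)+
    then have "(u', w') \<in> A \<or> (w', u') \<in> A"
      using Suc.hyps(1)[of u' w'] Suc.hyps(2) u' w' Suc.prems(3) False by simp
    then show ?thesis
    proof
      assume "(u', w') \<in> A"
      then show ?thesis
        using adjacent_via_preds[OF Suc.prems(1,4) w'(1) _ u'(1,2) _ w'(2) Suc.prems(6)]
          u'(3) w'(3) Suc.prems(3) by simp
    next
      assume "(w', u') \<in> A"
      then show ?thesis
        using adjacent_via_preds[OF Suc.prems(2,5) u'(1) _ w'(1,2) _ u'(2)] Suc.prems(6)
          u'(3) w'(3) Suc.prems(3) by auto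
    qed
  qed
qed

definition reach_in :: "'a set" where
  "reach_in = {x\<in>reach. (x, v) \<in> A}"

definition layer :: "nat \<Rightarrow> 'a set" where
  "layer n = {x\<in>reach. (x, v) \<notin> A \<and> dist x = n}"

lemma reach_in_subset: "reach_in \<subseteq> V"
  unfolding reach_in_def using reach_subset_V by blast

lemma layer_subset: "layer n \<subseteq> V"
  unfolding layer_def using reach_subset_V by blast

lemma reach_in_tournament: "tournament reach_in (induced_arcs A reach_in)"
  using oriented reach_in_subset
proof (rule tournament_induced_arcs)
  show "(x, y) \<in> A \<or> (y, x) \<in> A" if "x \<in> reach_in" "y \<in> reach_in" "x \<noteq> y" for x y
    using that in_nbrs_adjacent[OF reach_subset_V[OF root_in_reach]] unfolding reach_in_def by blast
qed

lemma layer_tournament: "tournament (layer n) (induced_arcs A (layer n))"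
  using oriented layer_subset
proof (rule tournament_induced_arcs)
  show "(x, y) \<in> A \<or> (y, x) \<in> A" if "x \<in> layer n" "y \<in> layer n" "x \<noteq> y" for x y
    using that same_dist_adjacent unfolding layer_def by blast
qed

text \<open>reach_in gets the first hero_c colours and every layer the last hero_c colours. Inside
  a colour class, arcs never leave the reached set, never go from the first block to the
  second, and never decrease the distance in the second block, so every cycle stays inside
  one of these parts.\<close>

lemma dicolouring_extend:
  assumes hero: "hero VH AH" and free: "\<not> contains_induced V A VH AH"
    and rest: "dicolouring (W - reach) A (2 * hero_c VH AH) col'"
  obtains col where "dicolouring W A (2 * hero_c VH AH) col"
proof -
  let ?c = "hero_c VH AH"
  obtain f0 where f0: "dicolouring reach_in A ?c f0"
    using hero_dicolouring_induced[OF hero free reach_in_subset reach_in_tournament] .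
  define g where "g n = (SOME g. dicolouring (layer n) A ?c g)" for n
  have g: "dicolouring (layer n) A ?c (g n)" for n
    using hero_dicolouring_induced[OF hero free layer_subset layer_tournament, of n]
    unfolding g_def by (metis someI)
  define level where
    "level x = (if x \<notin> reach then 0 else if (x, v) \<in> A then 1 else Suc (Suc (dist x)))" for x
  define col where
    "col x = (if x \<notin> reach then col' x else if (x, v) \<in> A then f0 x else ?c + g (dist x) x)" for x
  have first_block: "col x < ?c \<longleftrightarrow> (x, v) \<in> A" if "x \<in> reach" for x
  proof (cases "(x, v) \<in> A")
    case True
    then have "x \<in> reach_in" using that unfolding reach_in_def by blast
    then show ?thesis using dicolouring_less[OF f0] True that unfolding col_def by simp
  qed (use that in \<open>simp add: col_def\<close>)
  have "dicolouring W A (2 * ?c) col"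
  proof (rule dicolouring_by_levels[where level = level])
    fix n
    show "dicolouring {x\<in>W. level x = n} A (2 * ?c) col"
    proof (cases n)
      case 0
      show ?thesis
        by (rule dicolouring_cong[OF rest]) (auto simp: 0 level_def col_def)
    next
      case (Suc m)
      show ?thesis
      proof (cases m)
        case 0
        have "dicolouring reach_in A (2 * ?c) f0" using dicolouring_mono[OF f0] by simp
        then show ?thesis
          by (rule dicolouring_cong)
            (use reach_subset in \<open>auto simp: Suc 0 level_def col_def reach_in_def\<close>)
      next
        case (Suc p)
        have "dicolouring (layer p) A (?c + ?c) (\<lambda>x. ?c + g p x)"
          using dicolouring_shift[OF g] .
        then show ?thesis unfolding mult_2
          by (rule dicolouring_cong)
            (use reach_subset in \<open>auto simp: \<open>n = Suc m\<close> Suc level_def col_def layer_def\<close>)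
      qed
    qed
  next
    fix x y assume "x \<in> W" "y \<in> W" "(x, y) \<in> A" "col x = col y"
    show "level x \<le> level y"
    proof (cases "x \<in> reach")
      case True
      then have "y \<in> reach" using reach_arc(1) \<open>(x, y) \<in> A\<close> \<open>y \<in> W\<close> by blast
      then have "(x, v) \<in> A \<longleftrightarrow> (y, v) \<in> A"
        using first_block \<open>x \<in> reach\<close> \<open>col x = col y\<close> by metis
      then show ?thesis
        using dist_mono_arc[OF True \<open>(x, y) \<in> A\<close> \<open>y \<in> W\<close>] True \<open>y \<in> reach\<close>
        unfolding level_def by auto
    qed (simp add: level_def)
  qed
  then show ?thesis using that by blast
qed

end

context local_tournament
begin

lemma dicolouring_twice_hero_c:
  assumes "hero VH AH" and "\<not> contains_induced V A VH AH" and "W \<subseteq> V"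
  obtains col where "dicolouring W A (2 * hero_c VH AH) col"
proof -
  have "finite W"
    using assms(3) oriented finite_subset unfolding oriented_def digraph_def by blast
  then have "\<exists>col. dicolouring W A (2 * hero_c VH AH) col"
    using assms(3)
  proof (induction W rule: finite_psubset_induct)
    case (psubset W)
    show ?case
    proof (cases "W = {}")
      case False
      then obtain v where "v \<in> W" by blast
      with psubset.prems interpret local_tournament_root V A W v by unfold_locales
      have "W - reach \<subset> W" using root_in_reach \<open>v \<in> W\<close> by blast
      then obtain col' where "dicolouring (W - reach) A (2 * hero_c VH AH) col'"
        using psubset.IH psubset.prems by blast
      then show ?thesis using dicolouring_extend[OF assms(1,2)] by blast
    qed simp
  qed
  then show ?thesis using that by blast
qed

end

theorem theorem4p1:
  fixes VH :: "'b set" and AH :: "('b \<times> 'b) set"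
    and V :: "'a set" and A :: "('a \<times> 'a) set"
  assumes "hero VH AH"
    and "oriented V A"
    and "\<forall>x\<in>V. tournament (out_nbhd A x) (induced_arcs A (out_nbhd A x))"
    and "\<forall>x\<in>V. tournament (in_nbhd A x) (induced_arcs A (in_nbhd A x))"
    and "\<not> contains_induced V A VH AH"
  shows "dichromatic_number V A \<le> 2 * hero_c VH AH"
proof -
  interpret local_tournament V A using assms(2-4) by unfold_locales
  obtain col where "dicolouring V A (2 * hero_c VH AH) col"
    using dicolouring_twice_hero_c[OF assms(1,5) order_refl] by blast
  then show ?thesis by (rule dichromatic_number_le)
qed

end
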